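(* Let $\mathcal M=(M,<,+,0,\ldots)$ be a definably complete locally o-minimal expansion of an ordered group. Let $(G,d_G)$ be a definably compact definable metric group, $(X,d_X)$ a definable metric space, and suppose $G$ acts on $X$ by a definable continuous left action. Let $\pi:X\to Q$ be the canonical projection onto the definable quotient space $Q$ of $X$ by $G$. Then (1) $\pi$ is definably closed; and (2) $X$ is definably compact if and only if $Q$ is definably compact.
   Context: "Definable" means definable in $\mathcal M$ with parameters. $\mathcal M$ is an expansion of an ordered group with dense order without endpoints; locally o-minimal: for every definable $Y\subseteq M$ and $a\in M$ there is an open interval $I\ni a$ with $Y\cap I$ a finite union of points and open intervals; definably complete: every definable subset of $M$ has sup and inf in $M\cup\{\pm\infty\}$. A definable metric space $(X,d_X)$ is a definable set with a definable $d_X:X\times X\to\{a\ge0\}$ satisfying $d_X(x,y)=0\iff x=y$, symmetry and triangle inequality, topologized by the balls. A definable metric group is a definable metric space whose underlying set is a definable group with multiplication and inversion continuous. A definable topological space (definable set, topology with definable open base) is definably compact if every definable filtered family (any two members contain a common member) of nonempty closed subsets has nonempty intersection. The definable quotient is a definable topological space $(Q,\tau_Q)$ with definable continuous $\pi:X\to Q$ such that every definable continuous map from $X$ to a definable topological space constant on $G$-orbits factors as $\psi\circ\pi$ with $\psi$ definable continuous (concretely: $Q$ a definable set meeting each orbit in one point, $\pi(x)$ the point of $Q$ in $Gx$, and $S\subseteq Q$ open iff $\pi^{-1}(S)$ open). A definable map is definably closed if it maps definable closed sets to closed sets. *)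

theory Defs
  imports Main "HOL-Algebra.Group"
begin

text \<open>Points of M^n are lists of length n.  A first-order expansion of
(M,<,+,0) is represented by the collection D of all its definable-with-parameters
sets: D n is the family of definable subsets of M^n.  The closure conditions are
those of van den Dries' notion of a structure on M, plus the requirement that all
singletons (parameters), the order and the graph of addition are definable.\<close>

definition tuples :: "nat \<Rightarrow> 'm list set" where
  "tuples n = {xs. length xs = n}"

definition expansion_of_ogroup ::
  "(nat \<Rightarrow> ('m::{linordered_ab_group_add, dense_linorder, no_top, no_bot}) list set set) \<Rightarrow> bool" where
  "expansion_of_ogroup D \<longleftrightarrow>
     (\<forall>n. \<forall>A\<in>D n. A \<subseteq> tuples n) \<and>
     (\<forall>n. tuples n \<in> D n) \<and>
     (\<forall>n. \<forall>A\<in>D n. \<forall>B\<in>D n. A \<inter> B \<in> D n \<and> tuples n - A \<in> D n) \<and>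
     (\<forall>n. \<forall>A\<in>D n. {x # xs | x xs. xs \<in> A} \<in> D (Suc n) \<and> {xs @ [x] | xs x. xs \<in> A} \<in> D (Suc n)) \<and>
     (\<forall>n. {xs \<in> tuples n. hd xs = last xs} \<in> D n) \<and>
     (\<forall>n. \<forall>A\<in>D (Suc n). butlast ` A \<in> D n) \<and>
     (\<forall>a. {[a]} \<in> D 1) \<and>
     {[x, y] | x y. x < y} \<in> D 2 \<and>
     {[x, y, x + y] | x y. True} \<in> D 3"

definition set1 :: "'m list set \<Rightarrow> 'm set" where
  "set1 Y = {x. [x] \<in> Y}"

definition locally_o_minimal :: "(nat \<Rightarrow> ('m::linorder) list set set) \<Rightarrow> bool" where
  "locally_o_minimal D \<longleftrightarrow>
     (\<forall>Y\<in>D 1. \<forall>a. \<exists>b c. b < a \<and> a < c \<and>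
        (\<exists>P J. finite P \<and> finite J \<and>
           set1 Y \<inter> {b<..<c} = P \<union> (\<Union>(u, v)\<in>J. {u<..<v})))"

definition definably_complete :: "(nat \<Rightarrow> ('m::linorder) list set set) \<Rightarrow> bool" where
  "definably_complete D \<longleftrightarrow>
     (\<forall>Y\<in>D 1.
        (set1 Y \<noteq> {} \<and> (\<exists>b. \<forall>y\<in>set1 Y. y \<le> b) \<longrightarrow>
           (\<exists>s. (\<forall>y\<in>set1 Y. y \<le> s) \<and> (\<forall>b. (\<forall>y\<in>set1 Y. y \<le> b) \<longrightarrow> s \<le> b))) \<and>
        (set1 Y \<noteq> {} \<and> (\<exists>b. \<forall>y\<in>set1 Y. b \<le> y) \<longrightarrow>
           (\<exists>s. (\<forall>y\<in>set1 Y. s \<le> y) \<and> (\<forall>b. (\<forall>y\<in>set1 Y. b \<le> y) \<longrightarrow> b \<le> s))))"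

definition definable_map ::
  "(nat \<Rightarrow> 'm list set set) \<Rightarrow> nat \<Rightarrow> nat \<Rightarrow> 'm list set \<Rightarrow> ('m list \<Rightarrow> 'm list) \<Rightarrow> bool" where
  "definable_map D n m X f \<longleftrightarrow>
     X \<in> D n \<and> (\<forall>x\<in>X. length (f x) = m) \<and> {x @ f x | x. x \<in> X} \<in> D (n + m)"

definition definable_map2 ::
  "(nat \<Rightarrow> 'm list set set) \<Rightarrow> nat \<Rightarrow> nat \<Rightarrow> nat \<Rightarrow> 'm list set \<Rightarrow> 'm list set
     \<Rightarrow> ('m list \<Rightarrow> 'm list \<Rightarrow> 'm list) \<Rightarrow> bool" where
  "definable_map2 D n m k A B f \<longleftrightarrow>
     A \<in> D n \<and> B \<in> D m \<and> (\<forall>x\<in>A. \<forall>y\<in>B. length (f x y) = k) \<and>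
     {x @ y @ f x y | x y. x \<in> A \<and> y \<in> B} \<in> D (n + m + k)"

definition definable_metric ::
  "(nat \<Rightarrow> ('m::linordered_ab_group_add) list set set) \<Rightarrow> nat \<Rightarrow> 'm list set
     \<Rightarrow> ('m list \<Rightarrow> 'm list \<Rightarrow> 'm) \<Rightarrow> bool" where
  "definable_metric D n X d \<longleftrightarrow>
     X \<in> D n \<and> {x @ y @ [d x y] | x y. x \<in> X \<and> y \<in> X} \<in> D (n + n + 1) \<and>
     (\<forall>x\<in>X. \<forall>y\<in>X. 0 \<le> d x y \<and> (d x y = 0 \<longleftrightarrow> x = y) \<and> d x y = d y x \<and>
        (\<forall>z\<in>X. d x z \<le> d x y + d y z))"

definition metric_open ::
  "'m list set \<Rightarrow> ('m list \<Rightarrow> 'm list \<Rightarrow> 'm::linordered_ab_group_add) \<Rightarrow> 'm list set \<Rightarrow> bool" where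
  "metric_open X d U \<longleftrightarrow> U \<subseteq> X \<and> (\<forall>x\<in>U. \<exists>e>0. {y\<in>X. d x y < e} \<subseteq> U)"

text \<open>Definable families: a definable F in M^(k+n) gives the family of fibres
F_t = {x. t @ x \<in> F} indexed by the (definable) set of t in M^k with nonempty fibre.\<close>
definition fam_index :: "nat \<Rightarrow> 'm list set \<Rightarrow> 'm list set" where
  "fam_index k F = {t. length t = k \<and> (\<exists>x. t @ x \<in> F)}"

definition fam_fibre :: "nat \<Rightarrow> 'm list set \<Rightarrow> 'm list \<Rightarrow> 'm list set" where
  "fam_fibre n F t = {x. length x = n \<and> t @ x \<in> F}"

definition definably_compact ::
  "(nat \<Rightarrow> 'm list set set) \<Rightarrow> nat \<Rightarrow> 'm list set \<Rightarrow> ('m list set \<Rightarrow> bool) \<Rightarrow> bool" where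
  "definably_compact D n S opn \<longleftrightarrow>
     (\<forall>k. \<forall>F\<in>D (k + n).
        fam_index k F \<noteq> {} \<and>
        (\<forall>t\<in>fam_index k F. fam_fibre n F t \<subseteq> S \<and> opn (S - fam_fibre n F t)) \<and>
        (\<forall>t1\<in>fam_index k F. \<forall>t2\<in>fam_index k F. \<exists>t3\<in>fam_index k F.
            fam_fibre n F t3 \<subseteq> fam_fibre n F t1 \<inter> fam_fibre n F t2)
        \<longrightarrow> (\<Inter>t\<in>fam_index k F. fam_fibre n F t) \<noteq> {})"

definition definable_open_base ::
  "(nat \<Rightarrow> 'm list set set) \<Rightarrow> nat \<Rightarrow> 'm list set \<Rightarrow> ('m list set \<Rightarrow> bool) \<Rightarrow> bool" where
  "definable_open_base D n S opn \<longleftrightarrow>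
     (\<exists>k. \<exists>B\<in>D (k + n).
        (\<forall>t\<in>fam_index k B. fam_fibre n B t \<subseteq> S \<and> opn (fam_fibre n B t)) \<and>
        (\<forall>U. opn U \<longrightarrow> (\<forall>x\<in>U. \<exists>t\<in>fam_index k B. x \<in> fam_fibre n B t \<and> fam_fibre n B t \<subseteq> U)))"

definition definable_metric_group ::
  "(nat \<Rightarrow> ('m::linordered_ab_group_add) list set set) \<Rightarrow> nat \<Rightarrow> 'm list monoid
     \<Rightarrow> ('m list \<Rightarrow> 'm list \<Rightarrow> 'm) \<Rightarrow> bool" where
  "definable_metric_group D p G dG \<longleftrightarrow>
     group G \<and> definable_metric D p (carrier G) dG \<and>
     definable_map2 D p p p (carrier G) (carrier G) (\<lambda>g h. g \<otimes>\<^bsub>G\<^esub> h) \<and>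
     definable_map D p p (carrier G) (\<lambda>g. inv\<^bsub>G\<^esub> g) \<and>
     (\<forall>g\<in>carrier G. \<forall>h\<in>carrier G. \<forall>e>0. \<exists>\<delta>>0. \<forall>g'\<in>carrier G. \<forall>h'\<in>carrier G.
        dG g g' < \<delta> \<and> dG h h' < \<delta> \<longrightarrow> dG (g \<otimes>\<^bsub>G\<^esub> h) (g' \<otimes>\<^bsub>G\<^esub> h') < e) \<and>
     (\<forall>g\<in>carrier G. \<forall>e>0. \<exists>\<delta>>0. \<forall>g'\<in>carrier G.
        dG g g' < \<delta> \<longrightarrow> dG (inv\<^bsub>G\<^esub> g) (inv\<^bsub>G\<^esub> g') < e)"

definition definable_continuous_action ::
  "(nat \<Rightarrow> ('m::linordered_ab_group_add) list set set) \<Rightarrow> nat \<Rightarrow> nat \<Rightarrow> 'm list monoid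
     \<Rightarrow> ('m list \<Rightarrow> 'm list \<Rightarrow> 'm) \<Rightarrow> 'm list set \<Rightarrow> ('m list \<Rightarrow> 'm list \<Rightarrow> 'm)
     \<Rightarrow> ('m list \<Rightarrow> 'm list \<Rightarrow> 'm list) \<Rightarrow> bool" where
  "definable_continuous_action D p n G dG X dX act \<longleftrightarrow>
     definable_map2 D p n n (carrier G) X act \<and>
     (\<forall>g\<in>carrier G. \<forall>x\<in>X. act g x \<in> X) \<and>
     (\<forall>x\<in>X. act \<one>\<^bsub>G\<^esub> x = x) \<and>
     (\<forall>g\<in>carrier G. \<forall>h\<in>carrier G. \<forall>x\<in>X. act (g \<otimes>\<^bsub>G\<^esub> h) x = act g (act h x)) \<and>
     (\<forall>g\<in>carrier G. \<forall>x\<in>X. \<forall>e>0. \<exists>\<delta>>0. \<forall>g'\<in>carrier G. \<forall>x'\<in>X.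
        dG g g' < \<delta> \<and> dX x x' < \<delta> \<longrightarrow> dX (act g x) (act g' x') < e)"

definition orbit :: "'m list monoid \<Rightarrow> ('m list \<Rightarrow> 'm list \<Rightarrow> 'm list) \<Rightarrow> 'm list \<Rightarrow> 'm list set" where
  "orbit G act x = {act g x | g. g \<in> carrier G}"

definition quotient_open ::
  "'m list set \<Rightarrow> ('m list \<Rightarrow> 'm list \<Rightarrow> 'm::linordered_ab_group_add) \<Rightarrow> 'm list set
     \<Rightarrow> ('m list \<Rightarrow> 'm list) \<Rightarrow> 'm list set \<Rightarrow> bool" where
  "quotient_open X dX Q pi S \<longleftrightarrow> S \<subseteq> Q \<and> metric_open X dX {x\<in>X. pi x \<in> S}"

text \<open>(Q, pi) is the definable quotient of X by the action: Q a definable set of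
representatives meeting each orbit in exactly one point, pi x the point of Q in
the orbit of x, quotient topology, and the quotient is a definable topological space.\<close>
definition definable_quotient ::
  "(nat \<Rightarrow> ('m::linordered_ab_group_add) list set set) \<Rightarrow> nat \<Rightarrow> 'm list monoid
     \<Rightarrow> 'm list set \<Rightarrow> ('m list \<Rightarrow> 'm list \<Rightarrow> 'm) \<Rightarrow> ('m list \<Rightarrow> 'm list \<Rightarrow> 'm list)
     \<Rightarrow> 'm list set \<Rightarrow> ('m list \<Rightarrow> 'm list) \<Rightarrow> bool" where
  "definable_quotient D n G X dX act Q pi \<longleftrightarrow>
     Q \<in> D n \<and> Q \<subseteq> X \<and>
     (\<forall>x\<in>X. \<exists>!q. q \<in> Q \<and> q \<in> orbit G act x) \<and>
     (\<forall>x\<in>X. pi x \<in> Q \<and> pi x \<in> orbit G act x) \<and>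
     definable_open_base D n Q (quotient_open X dX Q pi)"

end

(*
  (1) Let C be a definable closed subset of X and x a point outside the saturation G C. If x were
  adherent to G C, the closures K e of {g. g C meets the e-ball around x} would form a decreasing
  definable family of nonempty closed subsets of G. Definable compactness of G gives g0 in every
  K e, and continuity of (g, y) \<mapsto> g\<inverse> y at (g0, x) puts g0\<inverse> x in the closure of C, that is
  in C, so x would lie in G C after all. Hence G C, the preimage of pi C, is closed.

  (2) pi is a definable continuous surjection onto Q, so pulling closed filtered families back along
  pi carries definable compactness from X to Q. Conversely, given a closed filtered family F on X,
  the images pi F t are closed by (1), so compactness of Q gives q in all of them; pulling F back
  along the orbit map g \<mapsto> g q into the definably compact G gives g with g q in every F t.
*)

theory Submission
  imports Defs
begin

section \<open>Definable predicates and families\<close>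

definition definable_pred :: "(nat \<Rightarrow> 'm list set set) \<Rightarrow> nat \<Rightarrow> ('m list \<Rightarrow> bool) \<Rightarrow> bool" where
  "definable_pred D m P \<longleftrightarrow> {y. length y = m \<and> P y} \<in> D m"

definition rel_family :: "nat \<Rightarrow> nat \<Rightarrow> ('m list \<Rightarrow> 'm list \<Rightarrow> bool) \<Rightarrow> 'm list set" where
  "rel_family k n R = {w. length w = k + n \<and> R (take k w) (drop k w)}"

lemma fam_fibre_rel_family:
  "length t = k \<Longrightarrow> fam_fibre n (rel_family k n R) t = {x. length x = n \<and> R t x}"
  by (auto simp: fam_fibre_def rel_family_def)

lemma fam_index_rel_family:
  "fam_index k (rel_family k n R) = {t. length t = k \<and> (\<exists>x. length x = n \<and> R t x)}"
  by (force simp: fam_index_def rel_family_def)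

lemma fam_index_rel_family_1:
  "fam_index 1 (rel_family 1 n (\<lambda>t. R (hd t))) = {[e] | e. \<exists>x. length x = n \<and> R e x}"
proof (intro equalityI subsetI)
  fix t assume "t \<in> fam_index 1 (rel_family 1 n (\<lambda>t. R (hd t)))"
  then obtain x where "length t = 1" and "length x = n" and "R (hd t) x"
    unfolding fam_index_rel_family by blast
  then show "t \<in> {[e] | e. \<exists>x. length x = n \<and> R e x}"
    by (cases t) auto
qed (auto simp: fam_index_rel_family)

lemma rel_family_in_D_iff:
  "rel_family k n R \<in> D (k + n) \<longleftrightarrow> definable_pred D (k + n) (\<lambda>w. R (take k w) (drop k w))"
  by (simp add: rel_family_def definable_pred_def)

definition coord_selection :: "nat \<Rightarrow> ('a list \<Rightarrow> 'a list) \<Rightarrow> bool" where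
  "coord_selection m \<sigma> \<longleftrightarrow>
     (\<exists>ix. (\<forall>i\<in>set ix. i < m) \<and> (\<forall>y. length y = m \<longrightarrow> \<sigma> y = map ((!) y) ix))"

lemma coord_selection_take_drop: "a + k \<le> m \<Longrightarrow> coord_selection m (\<lambda>y. take k (drop a y))"
  unfolding coord_selection_def by (intro exI[of _ "[a..<a + k]"]) (auto intro: nth_equalityI)

lemma coord_selection_take: "k \<le> m \<Longrightarrow> coord_selection m (\<lambda>y. take k y)"
  using coord_selection_take_drop[of 0 k m] by simp

lemma coord_selection_nth: "i < m \<Longrightarrow> coord_selection m (\<lambda>y. [y ! i])"
  unfolding coord_selection_def by (intro exI[of _ "[i]"]) auto

lemma coord_selection_append:
  assumes "coord_selection m \<sigma>\<^sub>1" and "coord_selection m \<sigma>\<^sub>2"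
  shows "coord_selection m (\<lambda>y. \<sigma>\<^sub>1 y @ \<sigma>\<^sub>2 y)"
proof -
  from assms obtain ix\<^sub>1 ix\<^sub>2 where
    "\<forall>i\<in>set ix\<^sub>1. i < m" "\<forall>y. length y = m \<longrightarrow> \<sigma>\<^sub>1 y = map ((!) y) ix\<^sub>1"
    "\<forall>i\<in>set ix\<^sub>2. i < m" "\<forall>y. length y = m \<longrightarrow> \<sigma>\<^sub>2 y = map ((!) y) ix\<^sub>2"
    unfolding coord_selection_def by blast
  then show ?thesis
    unfolding coord_selection_def by (intro exI[of _ "ix\<^sub>1 @ ix\<^sub>2"]) auto
qed

lemmas coord_selection_intros =
  coord_selection_take_drop coord_selection_take coord_selection_nth coord_selection_append

lemma graph_mem:
  assumes "\<And>x. x \<in> S \<Longrightarrow> length x = m" and "length a = m"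
  shows "a @ b \<in> {x @ f x | x. x \<in> S} \<longleftrightarrow> a \<in> S \<and> b = f a"
proof
  assume "a @ b \<in> {x @ f x | x. x \<in> S}"
  then obtain x where "a @ b = x @ f x" and "x \<in> S"
    by blast
  with assms show "a \<in> S \<and> b = f a"
    by (metis append_eq_append_conv)
qed blast

lemma graph2_mem:
  assumes "\<And>x. x \<in> A \<Longrightarrow> length x = m" and "\<And>y. y \<in> B \<Longrightarrow> length y = n"
    and "length a = m" and "length b = n"
  shows "a @ b @ c \<in> {x @ y @ f x y | x y. x \<in> A \<and> y \<in> B} \<longleftrightarrow> a \<in> A \<and> b \<in> B \<and> c = f a b"
proof
  assume "a @ b @ c \<in> {x @ y @ f x y | x y. x \<in> A \<and> y \<in> B}"
  then obtain x y where "a @ b @ c = x @ y @ f x y" and "x \<in> A" and "y \<in> B"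
    by blast
  with assms show "a \<in> A \<and> b \<in> B \<and> c = f a b"
    by (metis append_eq_append_conv)
qed blast

lemma definable_metric_self: "definable_metric D n S d \<Longrightarrow> x \<in> S \<Longrightarrow> d x x = 0"
  unfolding definable_metric_def by blast

lemma definable_metric_triangle:
  "definable_metric D n S d \<Longrightarrow> x \<in> S \<Longrightarrow> y \<in> S \<Longrightarrow> z \<in> S \<Longrightarrow> d x z \<le> d x y + d y z"
  unfolding definable_metric_def by blast

definition metric_closure ::
  "'m list set \<Rightarrow> ('m list \<Rightarrow> 'm list \<Rightarrow> 'm::linordered_ab_group_add) \<Rightarrow> 'm list set \<Rightarrow> 'm list set" where
  "metric_closure S d A = {x \<in> S. \<forall>e>0. \<exists>y\<in>A. d x y < e}"

lemma metric_open_compl_metric_closure: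
  fixes d :: "'m list \<Rightarrow> 'm list \<Rightarrow> 'm::{linordered_ab_group_add, dense_linorder}"
  assumes tri: "\<And>x y z. x \<in> S \<Longrightarrow> y \<in> S \<Longrightarrow> z \<in> S \<Longrightarrow> d x z \<le> d x y + d y z"
    and "A \<subseteq> S"
  shows "metric_open S d (S - metric_closure S d A)"
  unfolding metric_open_def
proof (intro conjI ballI)
  fix x assume "x \<in> S - metric_closure S d A"
  then have x: "x \<in> S" and "\<not> (\<forall>e>0. \<exists>y\<in>A. d x y < e)"
    by (auto simp: metric_closure_def)
  then obtain e where "0 < e" and far: "\<forall>y\<in>A. \<not> d x y < e"
    by blast
  then obtain e\<^sub>1 where e\<^sub>1: "0 < e\<^sub>1" "e\<^sub>1 < e"
    using dense by blast
  have "z \<notin> metric_closure S d A" if z: "z \<in> S" "d x z < e\<^sub>1" for z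
  proof
    assume "z \<in> metric_closure S d A"
    moreover have "0 < e - e\<^sub>1"
      using e\<^sub>1 by simp
    ultimately obtain y where "y \<in> A" and "d z y < e - e\<^sub>1"
      unfolding metric_closure_def by blast
    with \<open>A \<subseteq> S\<close> have "d x y \<le> d x z + d z y"
      using tri x z by blast
    also have "\<dots> < e\<^sub>1 + (e - e\<^sub>1)"
      using z(2) \<open>d z y < e - e\<^sub>1\<close> by (rule add_strict_mono)
    finally have "d x y < e"
      by simp
    with far \<open>y \<in> A\<close> show False
      by blast
  qed
  with e\<^sub>1 show "\<exists>e>0. {y \<in> S. d x y < e} \<subseteq> S - metric_closure S d A"
    by blast
qed blast

lemma metric_closure_subset:
  assumes "metric_open S d (S - C)" and "C \<subseteq> S"
  shows "metric_closure S d C \<subseteq> C"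
proof
  fix x assume x: "x \<in> metric_closure S d C"
  show "x \<in> C"
  proof (rule ccontr)
    assume "x \<notin> C"
    with x have "x \<in> S - C"
      by (simp add: metric_closure_def)
    with assms(1) obtain e where "0 < e" and "{y \<in> S. d x y < e} \<subseteq> S - C"
      unfolding metric_open_def by blast
    moreover from x \<open>0 < e\<close> obtain y where "y \<in> C" and "d x y < e"
      unfolding metric_closure_def by blast
    ultimately show False
      using assms(2) by blast
  qed
qed

lemma subset_metric_closure:
  assumes "\<And>x. x \<in> S \<Longrightarrow> d x x = 0" and "A \<subseteq> S"
  shows "A \<subseteq> metric_closure S d A"
  using assms by (force simp: metric_closure_def)

lemma metric_closure_mono: "A \<subseteq> B \<Longrightarrow> metric_closure S d A \<subseteq> metric_closure S d B"
  by (force simp: metric_closure_def)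

definition closed_filtered_family ::
  "(nat \<Rightarrow> 'm list set set) \<Rightarrow> nat \<Rightarrow> nat \<Rightarrow> 'm list set \<Rightarrow> ('m list set \<Rightarrow> bool) \<Rightarrow> 'm list set \<Rightarrow> bool" where
  "closed_filtered_family D k n S opn F \<longleftrightarrow>
     F \<in> D (k + n) \<and> fam_index k F \<noteq> {} \<and>
     (\<forall>t\<in>fam_index k F. fam_fibre n F t \<subseteq> S \<and> opn (S - fam_fibre n F t)) \<and>
     (\<forall>t\<^sub>1\<in>fam_index k F. \<forall>t\<^sub>2\<in>fam_index k F. \<exists>t\<^sub>3\<in>fam_index k F.
        fam_fibre n F t\<^sub>3 \<subseteq> fam_fibre n F t\<^sub>1 \<inter> fam_fibre n F t\<^sub>2)"

lemma definably_compact_iff: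
  "definably_compact D n S opn \<longleftrightarrow>
     (\<forall>k F. closed_filtered_family D k n S opn F \<longrightarrow> (\<Inter>t\<in>fam_index k F. fam_fibre n F t) \<noteq> {})"
  unfolding definably_compact_def closed_filtered_family_def by (simp only: Ball_def conj_assoc imp_conjL)

lemma definably_compactD:
  assumes "definably_compact D n S opn" and "closed_filtered_family D k n S opn F"
  shows "\<exists>x. \<forall>t\<in>fam_index k F. x \<in> fam_fibre n F t"
proof -
  from assms(1) have "(\<Inter>t\<in>fam_index k F. fam_fibre n F t) \<noteq> {}"
    unfolding definably_compact_iff using assms(2) by blast
  then show ?thesis
    by blast
qed

lemma closed_filtered_family_transfer:
  assumes F: "closed_filtered_family D k n S opn F" and F': "F' \<in> D (k + n')"
    and idx: "fam_index k F' \<subseteq> fam_index k F"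
    and fib: "\<And>t. t \<in> fam_index k F \<Longrightarrow> fam_fibre n' F' t = \<Phi> (fam_fibre n F t)"
    and ne: "\<And>t. t \<in> fam_index k F \<Longrightarrow> \<Phi> (fam_fibre n F t) \<noteq> {}"
    and closed: "\<And>t. t \<in> fam_index k F \<Longrightarrow> \<Phi> (fam_fibre n F t) \<subseteq> S' \<and> opn' (S' - \<Phi> (fam_fibre n F t))"
    and mono: "mono \<Phi>"
  shows "closed_filtered_family D k n' S' opn' F' \<and> fam_index k F' = fam_index k F"
proof -
  have "fam_index k F \<subseteq> fam_index k F'"
  proof
    fix t assume t: "t \<in> fam_index k F"
    then obtain x where "x \<in> fam_fibre n' F' t"
      using ne fib by blast
    with t show "t \<in> fam_index k F'"
      by (auto simp: fam_index_def fam_fibre_def)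
  qed
  with idx have idx_eq: "fam_index k F' = fam_index k F"
    by blast
  have "\<exists>t\<^sub>3\<in>fam_index k F. fam_fibre n' F' t\<^sub>3 \<subseteq> fam_fibre n' F' t\<^sub>1 \<inter> fam_fibre n' F' t\<^sub>2"
    if "t\<^sub>1 \<in> fam_index k F" and "t\<^sub>2 \<in> fam_index k F" for t\<^sub>1 t\<^sub>2
  proof -
    from F that obtain t\<^sub>3 where t\<^sub>3: "t\<^sub>3 \<in> fam_index k F"
      and "fam_fibre n F t\<^sub>3 \<subseteq> fam_fibre n F t\<^sub>1 \<inter> fam_fibre n F t\<^sub>2"
      unfolding closed_filtered_family_def by blast
    then have "\<Phi> (fam_fibre n F t\<^sub>3) \<subseteq> \<Phi> (fam_fibre n F t\<^sub>1) \<inter> \<Phi> (fam_fibre n F t\<^sub>2)"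
      using monoD[OF mono] by blast
    with t\<^sub>3 that show ?thesis
      using fib by auto
  qed
  moreover have "fam_index k F \<noteq> {}"
    using F by (simp add: closed_filtered_family_def)
  ultimately show ?thesis
    using F' fib closed idx_eq unfolding closed_filtered_family_def by simp
qed

section \<open>Definability calculus\<close>

locale ogroup_expansion =
  fixes D :: "nat \<Rightarrow> ('m::{linordered_ab_group_add, dense_linorder, no_top, no_bot}) list set set"
  assumes expansion: "expansion_of_ogroup D"
begin

lemma length_of_mem_D: "A \<in> D n \<Longrightarrow> y \<in> A \<Longrightarrow> length y = n"
  using expansion by (auto simp: expansion_of_ogroup_def tuples_def)

lemma D_tuples: "tuples n \<in> D n"
  using expansion unfolding expansion_of_ogroup_def by blast

lemma D_Int: "A \<in> D n \<Longrightarrow> B \<in> D n \<Longrightarrow> A \<inter> B \<in> D n"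
  using expansion unfolding expansion_of_ogroup_def by blast

lemma D_complement: "A \<in> D n \<Longrightarrow> tuples n - A \<in> D n"
  using expansion unfolding expansion_of_ogroup_def by blast

lemma D_Cons: "A \<in> D n \<Longrightarrow> {x # xs | x xs. xs \<in> A} \<in> D (Suc n)"
  using expansion unfolding expansion_of_ogroup_def by blast

lemma D_snoc: "A \<in> D n \<Longrightarrow> {xs @ [x] | xs x. xs \<in> A} \<in> D (Suc n)"
  using expansion unfolding expansion_of_ogroup_def by blast

lemma D_hd_eq_last: "{xs \<in> tuples n. hd xs = last xs} \<in> D n"
  using expansion unfolding expansion_of_ogroup_def by blast

lemma D_butlast: "A \<in> D (Suc n) \<Longrightarrow> butlast ` A \<in> D n"
  using expansion unfolding expansion_of_ogroup_def by blast

lemma D_singleton: "{[a]} \<in> D 1"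
  using expansion unfolding expansion_of_ogroup_def by blast

lemma D_less: "{[x, y] | x y. x < y} \<in> D 2"
  using expansion unfolding expansion_of_ogroup_def by blast

lemma definable_pred_mem: "A \<in> D m \<Longrightarrow> definable_pred D m (\<lambda>y. y \<in> A)"
proof -
  assume A: "A \<in> D m"
  have "{y. length y = m \<and> y \<in> A} = A"
    using length_of_mem_D[OF A] by auto
  with A show ?thesis
    by (simp add: definable_pred_def)
qed

lemma definable_pred_cong:
  assumes "definable_pred D m P" and "\<And>y. length y = m \<Longrightarrow> P y = Q y"
  shows "definable_pred D m Q"
proof -
  have "{y. length y = m \<and> P y} = {y. length y = m \<and> Q y}"
    using assms(2) by auto
  with assms(1) show ?thesis
    by (simp add: definable_pred_def)
qed

lemma definable_pred_True: "definable_pred D m (\<lambda>y. True)"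
  using D_tuples by (simp add: definable_pred_def tuples_def)

lemma definable_pred_conj:
  assumes "definable_pred D m P" and "definable_pred D m Q"
  shows "definable_pred D m (\<lambda>y. P y \<and> Q y)"
proof -
  have "{y. length y = m \<and> P y \<and> Q y} = {y. length y = m \<and> P y} \<inter> {y. length y = m \<and> Q y}"
    by auto
  then show ?thesis
    using D_Int assms unfolding definable_pred_def by simp
qed

lemma definable_pred_not:
  assumes "definable_pred D m P"
  shows "definable_pred D m (\<lambda>y. \<not> P y)"
proof -
  have "{y. length y = m \<and> \<not> P y} = tuples m - {y. length y = m \<and> P y}"
    by (auto simp: tuples_def)
  then show ?thesis
    using D_complement assms unfolding definable_pred_def by simp
qed

lemma definable_pred_imp:
  assumes "definable_pred D m P" and "definable_pred D m Q"
  shows "definable_pred D m (\<lambda>y. P y \<longrightarrow> Q y)"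
  using definable_pred_not[OF definable_pred_conj[OF assms(1) definable_pred_not[OF assms(2)]]]
  by (rule definable_pred_cong) simp

lemma definable_pred_tl:
  assumes "definable_pred D n P"
  shows "definable_pred D (Suc n) (\<lambda>y. P (tl y))"
proof -
  have "{x # xs | x xs. xs \<in> {y. length y = n \<and> P y}} = {y. length y = Suc n \<and> P (tl y)}"
  proof (intro equalityI subsetI)
    fix y assume "y \<in> {y. length y = Suc n \<and> P (tl y)}"
    then show "y \<in> {x # xs | x xs. xs \<in> {y. length y = n \<and> P y}}"
      by (cases y) auto
  qed auto
  then show ?thesis
    using D_Cons[OF assms[unfolded definable_pred_def]] unfolding definable_pred_def by simp
qed

lemma definable_pred_butlast:
  assumes "definable_pred D n P"
  shows "definable_pred D (Suc n) (\<lambda>y. P (butlast y))"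
proof -
  have "{xs @ [x] | xs x. xs \<in> {y. length y = n \<and> P y}} = {y. length y = Suc n \<and> P (butlast y)}"
  proof (intro equalityI subsetI)
    fix y assume "y \<in> {y. length y = Suc n \<and> P (butlast y)}"
    then show "y \<in> {xs @ [x] | xs x. xs \<in> {y. length y = n \<and> P y}}"
      by (cases y rule: rev_cases) auto
  qed auto
  then show ?thesis
    using D_snoc[OF assms[unfolded definable_pred_def]] unfolding definable_pred_def by simp
qed

lemma definable_pred_drop:
  "definable_pred D n P \<Longrightarrow> definable_pred D (k + n) (\<lambda>y. P (drop k y))"
proof (induction k)
  case (Suc k)
  from definable_pred_tl[OF Suc.IH[OF Suc.prems]] show ?case
    by (simp only: drop_Suc add_Suc)
qed simp

lemma definable_pred_take:
  "definable_pred D n P \<Longrightarrow> definable_pred D (n + k) (\<lambda>y. P (take n y))"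
proof (induction k)
  case (Suc k)
  from definable_pred_butlast[OF Suc.IH[OF Suc.prems]]
  have "definable_pred D (n + Suc k) (\<lambda>y. P (take n (butlast y)))"
    by simp
  then show ?case
    by (rule definable_pred_cong) (simp add: butlast_conv_take)
qed (auto elim: definable_pred_cong)

lemma definable_pred_ex_last:
  assumes "definable_pred D (Suc m) P"
  shows "definable_pred D m (\<lambda>y. \<exists>x. P (y @ [x]))"
proof -
  have "butlast ` {y. length y = Suc m \<and> P y} = {y. length y = m \<and> (\<exists>x. P (y @ [x]))}"
  proof (intro equalityI subsetI)
    fix y assume "y \<in> butlast ` {y. length y = Suc m \<and> P y}"
    then obtain w where "y = butlast w" "length w = Suc m" "P w" by blast
    then show "y \<in> {y. length y = m \<and> (\<exists>x. P (y @ [x]))}"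
      by (cases w rule: rev_cases) auto
  next
    fix y assume "y \<in> {y. length y = m \<and> (\<exists>x. P (y @ [x]))}"
    then show "y \<in> butlast ` {y. length y = Suc m \<and> P y}"
      by (force intro: image_eqI[where x = "y @ [_]"])
  qed
  then show ?thesis
    using D_butlast[OF assms[unfolded definable_pred_def]] unfolding definable_pred_def by simp
qed

lemma definable_pred_ex:
  "definable_pred D (m + k) P \<Longrightarrow> definable_pred D m (\<lambda>y. \<exists>z. length z = k \<and> P (y @ z))"
proof (induction k arbitrary: P)
  case 0
  then show ?case by simp
next
  case (Suc k)
  from Suc.IH[OF definable_pred_ex_last] Suc.prems
  have "definable_pred D m (\<lambda>y. \<exists>z. length z = k \<and> (\<exists>x. P ((y @ z) @ [x])))"
    by simp
  then show ?case
  proof (rule definable_pred_cong)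
    fix y :: "'m list"
    show "(\<exists>z. length z = k \<and> (\<exists>x. P ((y @ z) @ [x]))) = (\<exists>z. length z = Suc k \<and> P (y @ z))"
      by (metis append_assoc length_Suc_conv_rev)
  qed
qed

lemma definable_pred_all_last:
  assumes "definable_pred D (Suc m) P"
  shows "definable_pred D m (\<lambda>y. \<forall>x. P (y @ [x]))"
  using definable_pred_not[OF definable_pred_ex_last[OF definable_pred_not[OF assms]]]
  by (rule definable_pred_cong) blast

lemma definable_pred_nth_eq:
  assumes "i < m" and "j < m"
  shows "definable_pred D m (\<lambda>y. y ! i = y ! j)"
proof -
  have le_case: "definable_pred D m (\<lambda>y. y ! i = y ! j)" if ij: "i \<le> j" "j < m" for i j
  proof -
    have "definable_pred D (j - i + 1) (\<lambda>u. hd u = last u)"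
      using D_hd_eq_last[of "j - i + 1"] by (simp add: definable_pred_def tuples_def)
    from definable_pred_take[OF definable_pred_drop[OF this, of i], of "m - j - 1"]
    have "definable_pred D m (\<lambda>y. hd (drop i (take (Suc j) y)) = last (drop i (take (Suc j) y)))"
      using ij by (simp add: Suc_diff_le)
    then show ?thesis
    proof (rule definable_pred_cong)
      fix y :: "'m list" assume "length y = m"
      with ij show "(hd (drop i (take (Suc j) y)) = last (drop i (take (Suc j) y))) = (y ! i = y ! j)"
        by (cases "m = Suc j") (auto simp: hd_drop_conv_nth last_conv_nth min_def)
    qed
  qed
  show ?thesis
  proof (cases "i \<le> j")
    case False
    with le_case[of j i] assms show ?thesis
      by (auto elim: definable_pred_cong)
  qed (use le_case assms in blast)
qed

lemma definable_pred_reindex: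
  assumes P: "definable_pred D k P" and k: "length ix = k" and ix: "\<forall>i\<in>set ix. i < m"
  shows "definable_pred D m (\<lambda>y. P (map ((!) y) ix))"
proof -
  let ?k = "length ix"
  have eqs: "definable_pred D (m + ?k) (\<lambda>w. \<forall>l<j. w ! (m + l) = w ! (ix ! l))" if "j \<le> ?k" for j
    using that
  proof (induction j)
    case (Suc j)
    then have "ix ! j < m"
      using ix by simp
    with Suc have "definable_pred D (m + ?k) (\<lambda>w. (\<forall>l<j. w ! (m + l) = w ! (ix ! l)) \<and> w ! (m + j) = w ! (ix ! j))"
      by (intro definable_pred_conj definable_pred_nth_eq) auto
    then show ?case
      by (rule definable_pred_cong) (auto simp: less_Suc_eq)
  qed (simp add: definable_pred_True)
  have "definable_pred D (m + ?k) (\<lambda>w. P (drop m w) \<and> (\<forall>l<?k. w ! (m + l) = w ! (ix ! l)))"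
    using definable_pred_drop[OF P] eqs k by (intro definable_pred_conj) auto
  from definable_pred_ex[OF this] show ?thesis
  proof (rule definable_pred_cong)
    fix y :: "'m list" assume y: "length y = m"
    have shift: "(y @ z) ! (m + l) = z ! l" "(y @ z) ! (ix ! l) = y ! (ix ! l)" if "l < ?k" for z l
      using y ix that by (simp_all add: nth_append)
    show "(\<exists>z. length z = ?k \<and> P (drop m (y @ z)) \<and> (\<forall>l<?k. (y @ z) ! (m + l) = (y @ z) ! (ix ! l)))
        = P (map ((!) y) ix)"
    proof
      assume "\<exists>z. length z = ?k \<and> P (drop m (y @ z)) \<and> (\<forall>l<?k. (y @ z) ! (m + l) = (y @ z) ! (ix ! l))"
      then obtain z where z: "length z = ?k" "P (drop m (y @ z))" "\<forall>l<?k. (y @ z) ! (m + l) = (y @ z) ! (ix ! l)"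
        by blast
      then have "z = map ((!) y) ix"
        using shift by (simp add: list_eq_iff_nth_eq)
      with z y show "P (map ((!) y) ix)"
        by simp
    qed (use y shift in \<open>intro exI[of _ "map ((!) y) ix"], auto\<close>)
  qed
qed

lemma definable_pred_coord_selection:
  assumes P: "definable_pred D l P" and \<sigma>: "coord_selection m \<sigma>"
    and len: "\<And>y. length y = m \<Longrightarrow> length (\<sigma> y) = l"
  shows "definable_pred D m (\<lambda>y. P (\<sigma> y))"
proof -
  from \<sigma> obtain ix where ix: "\<forall>i\<in>set ix. i < m"
    and \<sigma>_eq: "\<And>y. length y = m \<Longrightarrow> \<sigma> y = map ((!) y) ix"
    unfolding coord_selection_def by blast
  have "length ix = l"
    using len[of "replicate m undefined"] \<sigma>_eq[of "replicate m undefined"] by simp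
  from definable_pred_reindex[OF P this ix] show ?thesis
    by (rule definable_pred_cong) (simp add: \<sigma>_eq)
qed

lemma definable_pred_nth_less:
  assumes "i < m" and "j < m"
  shows "definable_pred D m (\<lambda>y. y ! i < y ! j)"
proof -
  have "{z. length z = 2 \<and> z ! 0 < z ! 1} = {[x, y] | x y. (x::'m) < y}"
  proof (intro equalityI subsetI)
    fix z :: "'m list" assume "z \<in> {z. length z = 2 \<and> z ! 0 < z ! 1}"
    then show "z \<in> {[x, y] | x y. x < y}"
      by (auto simp: numeral_2_eq_2 length_Suc_conv)
  qed auto
  then have "definable_pred D 2 (\<lambda>z. z ! 0 < z ! 1)"
    unfolding definable_pred_def by (simp only: D_less)
  from definable_pred_reindex[OF this, of "[i, j]"] assms show ?thesis
    by simp
qed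

lemma definable_pred_nth_eq_const:
  assumes "i < m"
  shows "definable_pred D m (\<lambda>y. y ! i = a)"
proof -
  have "{z. length z = 1 \<and> z ! 0 = a} = {[a]}"
    by (auto simp: length_Suc_conv)
  then have "definable_pred D 1 (\<lambda>z. z ! 0 = a)"
    unfolding definable_pred_def by (simp only: D_singleton)
  from definable_pred_reindex[OF this, of "[i]"] assms show ?thesis
    by simp
qed

lemma definable_pred_const_less_nth:
  assumes "i < m"
  shows "definable_pred D m (\<lambda>y. a < y ! i)"
proof -
  have "definable_pred D (m + 1) (\<lambda>y. y ! m = a \<and> y ! m < y ! i)"
    using assms by (intro definable_pred_conj definable_pred_nth_eq_const definable_pred_nth_less) auto
  from definable_pred_ex[OF this] show ?thesis
    by (rule definable_pred_cong) (use assms in \<open>auto simp: nth_append length_Suc_conv\<close>)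
qed

lemma definable_pred_param_Cons:
  assumes "definable_pred D (Suc m) P"
  shows "definable_pred D m (\<lambda>y. P (a # y))"
proof -
  have "definable_pred D (m + 1) (\<lambda>w. w ! m = a \<and> P (map ((!) w) (m # [0..<m])))"
    using assms by (intro definable_pred_conj definable_pred_nth_eq_const definable_pred_reindex) auto
  from definable_pred_ex[OF this] show ?thesis
  proof (rule definable_pred_cong)
    fix y :: "'m list" assume y: "length y = m"
    then have "map ((!) (y @ [b])) (m # [0..<m]) = b # y" for b
      by (simp add: map_upt_eqI nth_append)
    then show "(\<exists>z. length z = 1 \<and> (y @ z) ! m = a \<and> P (map ((!) (y @ z)) (m # [0..<m]))) = P (a # y)"
      using y by (auto simp: length_Suc_conv)
  qed
qed

lemma definable_pred_param:
  "definable_pred D (k + m) P \<Longrightarrow> length c = k \<Longrightarrow> definable_pred D m (\<lambda>y. P (c @ y))"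
proof (induction c arbitrary: k P)
  case (Cons a c)
  then have "definable_pred D (length c + m) (\<lambda>y. P (a # y))"
    by (intro definable_pred_param_Cons) auto
  from Cons.IH[OF this refl] show ?case
    by simp
qed simp

lemma fam_fibre_in_D:
  assumes "F \<in> D (k + n)" and "length t = k"
  shows "fam_fibre n F t \<in> D n"
  using definable_pred_param[OF definable_pred_mem[OF assms(1)] assms(2)]
  by (simp add: definable_pred_def fam_fibre_def)

lemma fam_fibre_nonempty:
  assumes "F \<in> D (k + n)" and "t \<in> fam_index k F"
  shows "fam_fibre n F t \<noteq> {}"
proof -
  from assms(2) obtain x where t: "length t = k" and x: "t @ x \<in> F"
    by (auto simp: fam_index_def)
  with length_of_mem_D[OF assms(1) x] have "x \<in> fam_fibre n F t"
    by (simp add: fam_fibre_def)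
  then show ?thesis
    by blast
qed

lemma definable_mapI:
  assumes S: "S \<in> D m" and len: "\<And>x. x \<in> S \<Longrightarrow> length (f x) = n"
    and graph: "definable_pred D (m + n) (\<lambda>v. take m v \<in> S \<and> drop m v = f (take m v))"
  shows "definable_map D m n S f"
proof -
  have eq: "{x @ f x | x. x \<in> S} = {v. length v = m + n \<and> take m v \<in> S \<and> drop m v = f (take m v)}"
  proof (intro equalityI subsetI)
    fix v assume v: "v \<in> {v. length v = m + n \<and> take m v \<in> S \<and> drop m v = f (take m v)}"
    then have "v = take m v @ f (take m v)"
      using append_take_drop_id[of m v] by simp
    with v show "v \<in> {x @ f x | x. x \<in> S}"
      by blast
  next
    fix v assume "v \<in> {x @ f x | x. x \<in> S}"
    then obtain x where "v = x @ f x" "x \<in> S"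
      by blast
    with len length_of_mem_D[OF S] show "v \<in> {v. length v = m + n \<and> take m v \<in> S \<and> drop m v = f (take m v)}"
      by simp
  qed
  from graph have "{x @ f x | x. x \<in> S} \<in> D (m + n)"
    unfolding eq definable_pred_def .
  with S len show ?thesis
    unfolding definable_map_def by blast
qed

lemma rel_family_preimage_in_D:
  assumes f: "definable_map D m n S f" and F: "F \<in> D (k + n)"
  shows "rel_family k m (\<lambda>t x. x \<in> S \<and> t @ f x \<in> F) \<in> D (k + m)"
proof -
  define \<Gamma> where "\<Gamma> = {x @ f x | x. x \<in> S}"
  from f have S: "S \<in> D m" and len: "\<And>x. x \<in> S \<Longrightarrow> length (f x) = n" and \<Gamma>: "\<Gamma> \<in> D (m + n)"
    by (auto simp: definable_map_def \<Gamma>_def)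
  have \<Gamma>_mem: "length a = m \<Longrightarrow> a @ b \<in> \<Gamma> \<longleftrightarrow> a \<in> S \<and> b = f a" for a b
    unfolding \<Gamma>_def using length_of_mem_D[OF S] by (rule graph_mem)
  have "definable_pred D (k + m + n)
      (\<lambda>w. take m (drop k w) @ take n (drop (k + m) w) \<in> \<Gamma> \<and> take k w @ take n (drop (k + m) w) \<in> F)"
    by (intro definable_pred_conj definable_pred_coord_selection[OF definable_pred_mem[OF \<Gamma>]]
        definable_pred_coord_selection[OF definable_pred_mem[OF F]] coord_selection_intros) auto
  from definable_pred_ex[OF this]
  have "definable_pred D (k + m) (\<lambda>w. drop k w \<in> S \<and> take k w @ f (drop k w) \<in> F)"
    by (rule definable_pred_cong) (simp add: \<Gamma>_mem cong: conj_cong; use len in blast)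
  then show ?thesis
    by (simp add: rel_family_in_D_iff)
qed

lemma rel_family_image_in_D:
  assumes f: "definable_map D m n S f" and F: "F \<in> D (k + m)"
  shows "rel_family k n (\<lambda>t y. \<exists>x\<in>S. t @ x \<in> F \<and> y = f x) \<in> D (k + n)"
proof -
  define \<Gamma> where "\<Gamma> = {x @ f x | x. x \<in> S}"
  from f have S: "S \<in> D m" and len: "\<And>x. x \<in> S \<Longrightarrow> length (f x) = n" and \<Gamma>: "\<Gamma> \<in> D (m + n)"
    by (auto simp: definable_map_def \<Gamma>_def)
  have \<Gamma>_mem: "length a = m \<Longrightarrow> a @ b \<in> \<Gamma> \<longleftrightarrow> a \<in> S \<and> b = f a" for a b
    unfolding \<Gamma>_def using length_of_mem_D[OF S] by (rule graph_mem)
  have "definable_pred D (k + n + m)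
      (\<lambda>w. take m (drop (k + n) w) @ take n (drop k w) \<in> \<Gamma> \<and> take k w @ take m (drop (k + n) w) \<in> F)"
    by (intro definable_pred_conj definable_pred_coord_selection[OF definable_pred_mem[OF \<Gamma>]]
        definable_pred_coord_selection[OF definable_pred_mem[OF F]] coord_selection_intros) auto
  from definable_pred_ex[OF this]
  have "definable_pred D (k + n) (\<lambda>w. \<exists>x\<in>S. take k w @ x \<in> F \<and> drop k w = f x)"
    by (rule definable_pred_cong) (simp add: \<Gamma>_mem cong: conj_cong; blast dest: length_of_mem_D[OF S])
  then show ?thesis
    by (simp add: rel_family_in_D_iff)
qed

lemma rel_family_metric_closure_in_D:
  assumes d: "definable_metric D m S d" and V: "V \<in> D (k + m)"
    and VS: "\<And>t x. length t = k \<Longrightarrow> t @ x \<in> V \<Longrightarrow> x \<in> S"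
  shows "rel_family k m (\<lambda>t x. x \<in> metric_closure S d (fam_fibre m V t)) \<in> D (k + m)"
proof -
  define \<Gamma> where "\<Gamma> = {x @ y @ [d x y] | x y. x \<in> S \<and> y \<in> S}"
  from d have SD: "S \<in> D m" and \<Gamma>: "\<Gamma> \<in> D (m + m + 1)"
    by (simp_all add: definable_metric_def \<Gamma>_def)
  have \<Gamma>_mem: "length a = m \<Longrightarrow> length b = m \<Longrightarrow> a @ b @ c \<in> \<Gamma> \<longleftrightarrow> a \<in> S \<and> b \<in> S \<and> c = [d a b]" for a b c
    unfolding \<Gamma>_def using length_of_mem_D[OF SD] length_of_mem_D[OF SD] by (rule graph2_mem)
  define \<Phi> where "\<Phi> w \<longleftrightarrow> take m (drop k w) @ take m (drop (Suc (k + m)) w) @ [w ! (Suc (k + m) + m)] \<in> \<Gamma> \<and>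
      w ! (Suc (k + m) + m) < w ! (k + m) \<and> take k w @ take m (drop (Suc (k + m)) w) \<in> V" for w
  have "definable_pred D (Suc (Suc (k + m) + m)) \<Phi>"
    unfolding \<Phi>_def
    by (intro definable_pred_conj definable_pred_coord_selection[OF definable_pred_mem[OF \<Gamma>]]
        definable_pred_coord_selection[OF definable_pred_mem[OF V]] coord_selection_intros
        definable_pred_nth_less) auto
  from definable_pred_ex[OF definable_pred_ex_last[OF this]]
  have "definable_pred D (Suc (k + m)) (\<lambda>w. \<exists>y\<in>fam_fibre m V (take k w).
      take m (drop k w) \<in> S \<and> d (take m (drop k w)) y < w ! (k + m))"
  proof (rule definable_pred_cong)
    fix w :: "'m list" assume w: "length w = Suc (k + m)"
    then have "\<Phi> ((w @ y) @ [z]) \<longleftrightarrow> take m (drop k w) \<in> S \<and> y \<in> S \<and> z = d (take m (drop k w)) y \<and>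
        z < w ! (k + m) \<and> take k w @ y \<in> V" if "length y = m" for y z
      using that by (simp add: \<Phi>_def \<Gamma>_mem nth_append)
    then show "(\<exists>y. length y = m \<and> (\<exists>z. \<Phi> ((w @ y) @ [z]))) \<longleftrightarrow>
        (\<exists>y\<in>fam_fibre m V (take k w). take m (drop k w) \<in> S \<and> d (take m (drop k w)) y < w ! (k + m))"
      using w VS[of "take k w"] by (auto simp: fam_fibre_def)
  qed
  from definable_pred_conj[OF definable_pred_coord_selection[OF definable_pred_mem[OF SD]]
      definable_pred_all_last[OF definable_pred_imp[OF definable_pred_const_less_nth[of "k + m" _ 0] this]]]
  have "definable_pred D (k + m) (\<lambda>w. drop k w \<in> S \<and> (\<forall>e>0. \<exists>y\<in>fam_fibre m V (take k w). d (drop k w) y < e))"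
  proof (rule definable_pred_cong)
    show "coord_selection (k + m) (\<lambda>w. take m (drop k w))"
      by (rule coord_selection_take_drop) simp
    fix w :: "'m list" assume w: "length w = k + m"
    then have "take m (drop k (w @ [e])) = drop k w" "(w @ [e]) ! (k + m) = e" "take k (w @ [e]) = take k w" for e
      by (simp_all add: nth_append)
    then show "(take m (drop k w) \<in> S \<and> (\<forall>e. 0 < (w @ [e]) ! (k + m) \<longrightarrow>
        (\<exists>y\<in>fam_fibre m V (take k (w @ [e])). take m (drop k (w @ [e])) \<in> S \<and> d (take m (drop k (w @ [e]))) y < (w @ [e]) ! (k + m)))) \<longleftrightarrow>
      (drop k w \<in> S \<and> (\<forall>e>0. \<exists>y\<in>fam_fibre m V (take k w). d (drop k w) y < e))"
      using w by auto
  qed (simp_all add: add.commute)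
  then show ?thesis
    by (simp add: rel_family_in_D_iff metric_closure_def)
qed

subsection \<open>Transfer of definable compactness\<close>

lemma definably_compact_common_preimage:
  assumes S: "definably_compact D m S opn\<^sub>S" and f: "definable_map D m n S f"
    and cont: "\<And>C. C \<subseteq> T \<Longrightarrow> opn\<^sub>T (T - C) \<Longrightarrow> opn\<^sub>S (S - {x \<in> S. f x \<in> C})"
    and F: "closed_filtered_family D k n T opn\<^sub>T F"
    and meets: "\<And>t. t \<in> fam_index k F \<Longrightarrow> \<exists>x\<in>S. f x \<in> fam_fibre n F t"
  shows "\<exists>x\<in>S. \<forall>t\<in>fam_index k F. f x \<in> fam_fibre n F t"
proof -
  let ?F' = "rel_family k m (\<lambda>t x. x \<in> S \<and> t @ f x \<in> F)"
  from f have SD: "S \<in> D m" and len: "\<And>x. x \<in> S \<Longrightarrow> length (f x) = n"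
    by (simp_all add: definable_map_def)
  have fib: "fam_fibre m ?F' t = {x \<in> S. f x \<in> fam_fibre n F t}" if "t \<in> fam_index k F" for t
  proof -
    from that have "length t = k"
      by (simp add: fam_index_def)
    then have "fam_fibre m ?F' t = {x. length x = m \<and> x \<in> S \<and> t @ f x \<in> F}"
      by (rule fam_fibre_rel_family)
    also have "\<dots> = {x \<in> S. f x \<in> fam_fibre n F t}"
      unfolding fam_fibre_def using length_of_mem_D[OF SD] len by blast
    finally show ?thesis .
  qed
  have idx: "fam_index k ?F' \<subseteq> fam_index k F"
    unfolding fam_index_rel_family by (auto simp: fam_index_def)
  from F have FD: "F \<in> D (k + n)"
    and FT: "\<And>t. t \<in> fam_index k F \<Longrightarrow> fam_fibre n F t \<subseteq> T \<and> opn\<^sub>T (T - fam_fibre n F t)"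
    by (simp_all add: closed_filtered_family_def)
  have "closed_filtered_family D k m S opn\<^sub>S ?F' \<and> fam_index k ?F' = fam_index k F"
  proof (rule closed_filtered_family_transfer[where \<Phi> = "\<lambda>A. {x \<in> S. f x \<in> A}",
        OF F rel_family_preimage_in_D[OF f FD] idx fib])
    fix t assume t: "t \<in> fam_index k F"
    show "{x \<in> S. f x \<in> fam_fibre n F t} \<noteq> {}"
      using meets[OF t] by blast
    show "{x \<in> S. f x \<in> fam_fibre n F t} \<subseteq> S \<and> opn\<^sub>S (S - {x \<in> S. f x \<in> fam_fibre n F t})"
      using cont FT[OF t] by blast
  qed (auto simp: mono_def)
  then have F': "closed_filtered_family D k m S opn\<^sub>S ?F'" and idx_eq: "fam_index k ?F' = fam_index k F"
    by blast+
  from definably_compactD[OF S F'] idx_eq obtain x where x: "\<forall>t\<in>fam_index k F. x \<in> fam_fibre m ?F' t"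
    by auto
  obtain t where "t \<in> fam_index k F"
    using F by (auto simp: closed_filtered_family_def)
  with x fib show ?thesis
    by blast
qed

lemma definably_compact_common_image:
  assumes T: "definably_compact D n T opn\<^sub>T" and f: "definable_map D m n S f" and fS: "f ` S \<subseteq> T"
    and closed: "\<And>C. C \<in> D m \<Longrightarrow> C \<subseteq> S \<Longrightarrow> opn\<^sub>S (S - C) \<Longrightarrow> opn\<^sub>T (T - f ` C)"
    and F: "closed_filtered_family D k m S opn\<^sub>S F"
  shows "\<exists>y. \<forall>t\<in>fam_index k F. y \<in> f ` fam_fibre m F t"
proof -
  let ?F' = "rel_family k n (\<lambda>t y. \<exists>x\<in>S. t @ x \<in> F \<and> y = f x)"
  from f have len: "\<And>x. x \<in> S \<Longrightarrow> length (f x) = n"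
    by (auto simp: definable_map_def)
  from F have FD: "F \<in> D (k + m)" and FS: "\<And>t. t \<in> fam_index k F \<Longrightarrow> fam_fibre m F t \<subseteq> S"
    by (auto simp: closed_filtered_family_def)
  have lenI: "length t = k" if "t \<in> fam_index k F" for t
    using that by (simp add: fam_index_def)
  have fib: "fam_fibre n ?F' t = f ` fam_fibre m F t" if t: "t \<in> fam_index k F" for t
  proof -
    have "fam_fibre n ?F' t = {y. length y = n \<and> (\<exists>x\<in>S. t @ x \<in> F \<and> y = f x)}"
      using fam_fibre_rel_family[OF lenI[OF t]] .
    also have "\<dots> = f ` fam_fibre m F t"
    proof (intro equalityI subsetI)
      fix y assume "y \<in> {y. length y = n \<and> (\<exists>x\<in>S. t @ x \<in> F \<and> y = f x)}"
      then obtain x where "t @ x \<in> F" and "y = f x"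
        by blast
      moreover have "length x = m"
        using length_of_mem_D[OF FD \<open>t @ x \<in> F\<close>] lenI[OF t] by simp
      ultimately show "y \<in> f ` fam_fibre m F t"
        by (auto simp: fam_fibre_def)
    next
      fix y assume "y \<in> f ` fam_fibre m F t"
      then obtain x where "x \<in> fam_fibre m F t" and "y = f x"
        by blast
      with FS[OF t] len show "y \<in> {y. length y = n \<and> (\<exists>x\<in>S. t @ x \<in> F \<and> y = f x)}"
        by (auto simp: fam_fibre_def)
    qed
    finally show ?thesis .
  qed
  have idx: "fam_index k ?F' \<subseteq> fam_index k F"
    unfolding fam_index_rel_family by (auto simp: fam_index_def)
  have "closed_filtered_family D k n T opn\<^sub>T ?F' \<and> fam_index k ?F' = fam_index k F"
  proof (rule closed_filtered_family_transfer[where \<Phi> = "(`) f", OF F rel_family_image_in_D[OF f FD] idx fib])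
    fix t assume t: "t \<in> fam_index k F"
    show "f ` fam_fibre m F t \<noteq> {}"
      using fam_fibre_nonempty[OF FD t] by blast
    show "f ` fam_fibre m F t \<subseteq> T \<and> opn\<^sub>T (T - f ` fam_fibre m F t)"
      using fS FS[OF t] closed[OF fam_fibre_in_D[OF FD lenI[OF t]]] F t
      by (auto simp: closed_filtered_family_def)
  qed (auto simp: mono_def)
  then have F': "closed_filtered_family D k n T opn\<^sub>T ?F'" and idx_eq: "fam_index k ?F' = fam_index k F"
    by blast+
  from definably_compactD[OF T F'] idx_eq obtain y where "\<forall>t\<in>fam_index k F. y \<in> fam_fibre n ?F' t"
    by auto
  with fib show ?thesis
    by auto
qed

lemma definably_compact_decreasing_common_point:
  assumes S: "definably_compact D n S opn" and SD: "S \<in> D n"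
    and R: "rel_family 1 n (\<lambda>t x. R (hd t) x) \<in> D (1 + n)"
    and sub: "\<And>e x. R e x \<Longrightarrow> x \<in> S"
    and closed: "\<And>e. opn (S - {x. R e x})"
    and mono: "\<And>e e' x. e \<le> e' \<Longrightarrow> R e x \<Longrightarrow> R e' x"
    and ne: "\<And>e. 0 < e \<Longrightarrow> \<exists>x. R e x"
  shows "\<exists>x. \<forall>e>0. R e x"
proof -
  let ?F = "rel_family 1 n (\<lambda>t x. R (hd t) x)"
  have R_len: "length x = n" if "R e x" for e x
    using length_of_mem_D[OF SD sub[OF that]] .
  have fib: "fam_fibre n ?F [e] = {x. R e x}" for e
    using fam_fibre_rel_family[of "[e]" 1 n] R_len by auto
  have idx: "fam_index 1 ?F = {[e] | e. \<exists>x. R e x}"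
    unfolding fam_index_rel_family_1 using R_len by blast
  obtain e\<^sub>0 :: 'm where "0 < e\<^sub>0"
    using gt_ex by blast
  have "closed_filtered_family D 1 n S opn ?F"
    unfolding closed_filtered_family_def
  proof (intro conjI)
    show "fam_index 1 ?F \<noteq> {}"
      using ne[OF \<open>0 < e\<^sub>0\<close>] idx by auto
    show "\<forall>t\<in>fam_index 1 ?F. fam_fibre n ?F t \<subseteq> S \<and> opn (S - fam_fibre n ?F t)"
      using idx fib sub closed by auto
    show "\<forall>t\<^sub>1\<in>fam_index 1 ?F. \<forall>t\<^sub>2\<in>fam_index 1 ?F. \<exists>t\<^sub>3\<in>fam_index 1 ?F.
        fam_fibre n ?F t\<^sub>3 \<subseteq> fam_fibre n ?F t\<^sub>1 \<inter> fam_fibre n ?F t\<^sub>2"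
    proof (intro ballI)
      fix t\<^sub>1 t\<^sub>2 assume "t\<^sub>1 \<in> fam_index 1 ?F" and "t\<^sub>2 \<in> fam_index 1 ?F"
      then obtain e\<^sub>1 e\<^sub>2 where t: "t\<^sub>1 = [e\<^sub>1]" "t\<^sub>2 = [e\<^sub>2]" and "\<exists>x. R e\<^sub>1 x" "\<exists>x. R e\<^sub>2 x"
        using idx by auto
      then have "[min e\<^sub>1 e\<^sub>2] \<in> fam_index 1 ?F"
        using idx by (auto simp: min_def)
      moreover have "fam_fibre n ?F [min e\<^sub>1 e\<^sub>2] \<subseteq> fam_fibre n ?F t\<^sub>1 \<inter> fam_fibre n ?F t\<^sub>2"
        unfolding t fib using mono[OF min.cobounded1] mono[OF min.cobounded2] by blast
      ultimately show "\<exists>t\<^sub>3\<in>fam_index 1 ?F. fam_fibre n ?F t\<^sub>3 \<subseteq> fam_fibre n ?F t\<^sub>1 \<inter> fam_fibre n ?F t\<^sub>2"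
        by blast
    qed
  qed (use R in simp)
  from definably_compactD[OF S this] obtain x where x: "\<forall>t\<in>fam_index 1 ?F. x \<in> fam_fibre n ?F t"
    by blast
  have "R e x" if "0 < e" for e
    using x[rule_format, of "[e]"] ne[OF that] idx fib by auto
  then show ?thesis
    by blast
qed

end

section \<open>Definable group actions and their quotients\<close>

locale definable_action = ogroup_expansion D
  for D :: "nat \<Rightarrow> ('m::{linordered_ab_group_add, dense_linorder, no_top, no_bot}) list set set" +
  fixes G :: "'m list monoid" and dG :: "'m list \<Rightarrow> 'm list \<Rightarrow> 'm"
    and X :: "'m list set" and dX :: "'m list \<Rightarrow> 'm list \<Rightarrow> 'm"
    and act :: "'m list \<Rightarrow> 'm list \<Rightarrow> 'm list"
    and Q :: "'m list set" and pi :: "'m list \<Rightarrow> 'm list"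
    and p n :: nat
  assumes metric_group: "definable_metric_group D p G dG"
    and metric_X: "definable_metric D n X dX"
    and action: "definable_continuous_action D p n G dG X dX act"
    and quotient: "definable_quotient D n G X dX act Q pi"
begin

lemma group_G: "group G"
  using metric_group by (simp add: definable_metric_group_def)

lemma metric_G: "definable_metric D p (carrier G) dG"
  using metric_group by (simp add: definable_metric_group_def)

lemma carrier_G_in_D: "carrier G \<in> D p"
  using metric_G by (simp add: definable_metric_def)

lemma inv_continuous:
  "g \<in> carrier G \<Longrightarrow> 0 < e \<Longrightarrow> \<exists>\<delta>>0. \<forall>g'\<in>carrier G. dG g g' < \<delta> \<longrightarrow> dG (inv\<^bsub>G\<^esub> g) (inv\<^bsub>G\<^esub> g') < e"
  using metric_group by (simp add: definable_metric_group_def)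

lemma X_in_D: "X \<in> D n"
  using metric_X by (simp add: definable_metric_def)

definition act_graph :: "'m list set" where
  "act_graph = {g @ x @ act g x | g x. g \<in> carrier G \<and> x \<in> X}"

lemma act_graph_in_D: "act_graph \<in> D (p + n + n)"
  using action by (simp add: definable_continuous_action_def definable_map2_def act_graph_def)

lemma act_graph_mem:
  "length g = p \<Longrightarrow> length x = n \<Longrightarrow> g @ x @ y \<in> act_graph \<longleftrightarrow> g \<in> carrier G \<and> x \<in> X \<and> act g x = y"
  unfolding act_graph_def using graph2_mem[OF length_of_mem_D[OF carrier_G_in_D] length_of_mem_D[OF X_in_D]]
  by (simp only: eq_commute[of y])

lemma act_closed: "g \<in> carrier G \<Longrightarrow> x \<in> X \<Longrightarrow> act g x \<in> X"
  using action by (simp add: definable_continuous_action_def)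

lemma act_one: "x \<in> X \<Longrightarrow> act \<one>\<^bsub>G\<^esub> x = x"
  using action by (simp add: definable_continuous_action_def)

lemma act_mult: "g \<in> carrier G \<Longrightarrow> h \<in> carrier G \<Longrightarrow> x \<in> X \<Longrightarrow> act (g \<otimes>\<^bsub>G\<^esub> h) x = act g (act h x)"
  using action by (simp add: definable_continuous_action_def)

lemma act_continuous:
  "g \<in> carrier G \<Longrightarrow> x \<in> X \<Longrightarrow> 0 < e \<Longrightarrow>
     \<exists>\<delta>>0. \<forall>g'\<in>carrier G. \<forall>x'\<in>X. dG g g' < \<delta> \<and> dX x x' < \<delta> \<longrightarrow> dX (act g x) (act g' x') < e"
  using action by (simp add: definable_continuous_action_def)

lemma Q_in_D: "Q \<in> D n"
  using quotient by (simp add: definable_quotient_def)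

lemma Q_subset_X: "Q \<subseteq> X"
  using quotient by (simp add: definable_quotient_def)

lemma pi_in_Q: "x \<in> X \<Longrightarrow> pi x \<in> Q"
  using quotient by (simp add: definable_quotient_def)

lemma pi_in_orbit:
  assumes "x \<in> X"
  shows "\<exists>g\<in>carrier G. pi x = act g x"
proof -
  from quotient assms have "pi x \<in> orbit G act x"
    by (simp add: definable_quotient_def)
  then show ?thesis
    unfolding orbit_def by blast
qed

lemma act_inv_act: "g \<in> carrier G \<Longrightarrow> x \<in> X \<Longrightarrow> act (inv\<^bsub>G\<^esub> g) (act g x) = x"
  using act_mult[of "inv\<^bsub>G\<^esub> g" g x] act_one[of x] by (simp add: group.l_inv group.inv_closed group_G)

lemma pi_eq_iff_rep: "x \<in> X \<Longrightarrow> pi x = q \<longleftrightarrow> q \<in> Q \<and> (\<exists>g\<in>carrier G. act g x = q)"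
proof
  assume "x \<in> X" and "pi x = q"
  with pi_in_Q pi_in_orbit show "q \<in> Q \<and> (\<exists>g\<in>carrier G. act g x = q)"
    by fastforce
next
  assume x: "x \<in> X" and q: "q \<in> Q \<and> (\<exists>g\<in>carrier G. act g x = q)"
  from quotient x have "\<exists>!q. q \<in> Q \<and> q \<in> orbit G act x"
    by (simp add: definable_quotient_def)
  moreover have "pi x \<in> Q \<and> pi x \<in> orbit G act x"
    using pi_in_Q[OF x] pi_in_orbit[OF x] by (auto simp: orbit_def)
  moreover have "q \<in> orbit G act x"
    using q by (auto simp: orbit_def)
  ultimately show "pi x = q"
    using q by blast
qed

lemma pi_rep:
  assumes "q \<in> Q"
  shows "pi q = q"
proof -
  have "q \<in> X"
    using assms Q_subset_X by blast
  moreover have "act \<one>\<^bsub>G\<^esub> q = q" and "\<one>\<^bsub>G\<^esub> \<in> carrier G"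
    using act_one[OF \<open>q \<in> X\<close>] monoid.one_closed[OF group.is_monoid[OF group_G]] by simp_all
  ultimately show ?thesis
    using pi_eq_iff_rep assms by blast
qed

lemma pi_eq_iff: "x \<in> X \<Longrightarrow> y \<in> X \<Longrightarrow> pi x = pi y \<longleftrightarrow> (\<exists>g\<in>carrier G. y = act g x)"
proof
  assume x: "x \<in> X" and y: "y \<in> X" and "pi x = pi y"
  obtain a b where ab: "a \<in> carrier G" "b \<in> carrier G" "pi x = act a x" "pi y = act b y"
    using pi_in_orbit[OF x] pi_in_orbit[OF y] by blast
  with \<open>pi x = pi y\<close> have "y = act (inv\<^bsub>G\<^esub> b) (act a x)"
    using act_inv_act[OF ab(2) y] by simp
  also have "\<dots> = act (inv\<^bsub>G\<^esub> b \<otimes>\<^bsub>G\<^esub> a) x"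
    using act_mult ab x group.inv_closed[OF group_G] by simp
  finally show "\<exists>g\<in>carrier G. y = act g x"
    using ab group.inv_closed[OF group_G] monoid.m_closed[OF group.is_monoid[OF group_G]] by blast
next
  assume x: "x \<in> X" and y: "y \<in> X" and "\<exists>g\<in>carrier G. y = act g x"
  then obtain g b where g: "g \<in> carrier G" "y = act g x" and b: "b \<in> carrier G" "pi y = act b y"
    using pi_in_orbit by blast
  then have "act (b \<otimes>\<^bsub>G\<^esub> g) x = pi y"
    using act_mult x by simp
  moreover have "b \<otimes>\<^bsub>G\<^esub> g \<in> carrier G"
    using g b monoid.m_closed[OF group.is_monoid[OF group_G]] by blast
  ultimately show "pi x = pi y"
    using pi_eq_iff_rep[OF x] pi_in_Q[OF y] by blast
qed

lemma definable_map_pi: "definable_map D n n X pi"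
proof (rule definable_mapI[OF X_in_D])
  show "length (pi x) = n" if "x \<in> X" for x
    using length_of_mem_D[OF X_in_D] pi_in_Q[OF that] Q_subset_X by blast
  have "definable_pred D (n + n + p)
      (\<lambda>w. take n (drop n w) \<in> Q \<and> take p (drop (n + n) w) @ take n w @ take n (drop n w) \<in> act_graph)"
    by (intro definable_pred_conj definable_pred_coord_selection[OF definable_pred_mem[OF Q_in_D]]
        definable_pred_coord_selection[OF definable_pred_mem[OF act_graph_in_D]] coord_selection_intros) auto
  from definable_pred_ex[OF this]
  show "definable_pred D (n + n) (\<lambda>v. take n v \<in> X \<and> drop n v = pi (take n v))"
  proof (rule definable_pred_cong)
    fix v :: "'m list" assume v: "length v = n + n"
    have blocks: "take n (drop n (v @ g)) = drop n v" "take p (drop (n + n) (v @ g)) = g" "take n (v @ g) = take n v"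
      if "length g = p" for g
      using v that by simp_all
    have len: "length (take n v) = n"
      using v by simp
    have "(\<exists>g. length g = p \<and> take n (drop n (v @ g)) \<in> Q \<and>
          take p (drop (n + n) (v @ g)) @ take n (v @ g) @ take n (drop n (v @ g)) \<in> act_graph)
        \<longleftrightarrow> (\<exists>g. length g = p \<and> drop n v \<in> Q \<and> g \<in> carrier G \<and> take n v \<in> X \<and> act g (take n v) = drop n v)"
      (is "?lhs \<longleftrightarrow> _")
      by (simp only: blocks act_graph_mem[OF _ len] cong: conj_cong)
    also have "\<dots> \<longleftrightarrow> drop n v \<in> Q \<and> take n v \<in> X \<and> (\<exists>g\<in>carrier G. act g (take n v) = drop n v)"
      using length_of_mem_D[OF carrier_G_in_D] by blast
    also have "\<dots> \<longleftrightarrow> take n v \<in> X \<and> drop n v = pi (take n v)"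
      using pi_eq_iff_rep[of "take n v" "drop n v"] by auto
    finally show "?lhs \<longleftrightarrow> take n v \<in> X \<and> drop n v = pi (take n v)" .
  qed
qed

lemma definable_map_orbit:
  assumes q: "q \<in> X"
  shows "definable_map D p n (carrier G) (\<lambda>g. act g q)"
proof (rule definable_mapI[OF carrier_G_in_D])
  show "length (act g q) = n" if "g \<in> carrier G" for g
    using length_of_mem_D[OF X_in_D act_closed[OF that q]] .
  have q_len: "length q = n"
    using length_of_mem_D[OF X_in_D q] .
  have "definable_pred D (n + (p + n)) (\<lambda>u. take p (drop n u) @ take n u @ take n (drop (n + p) u) \<in> act_graph)"
    by (intro definable_pred_coord_selection[OF definable_pred_mem[OF act_graph_in_D]]
        coord_selection_intros) auto
  from definable_pred_param[OF this q_len]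
  show "definable_pred D (p + n) (\<lambda>v. take p v \<in> carrier G \<and> drop p v = act (take p v) q)"
  proof (rule definable_pred_cong)
    fix v :: "'m list" assume v: "length v = p + n"
    have "take p (drop n (q @ v)) = take p v" "take n (q @ v) = q" "take n (drop (n + p) (q @ v)) = drop p v"
      using v q_len by simp_all
    moreover have "length (take p v) = p"
      using v by simp
    ultimately show "take p (drop n (q @ v)) @ take n (q @ v) @ take n (drop (n + p) (q @ v)) \<in> act_graph
        \<longleftrightarrow> take p v \<in> carrier G \<and> drop p v = act (take p v) q"
      using act_graph_mem q_len q by auto
  qed
qed

lemma metric_open_orbit_preimage:
  assumes q: "q \<in> X" and U: "metric_open X dX U"
  shows "metric_open (carrier G) dG {g \<in> carrier G. act g q \<in> U}"
  unfolding metric_open_def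
proof (intro conjI ballI)
  fix g assume g: "g \<in> {g \<in> carrier G. act g q \<in> U}"
  then obtain e where "0 < e" and ball: "{y \<in> X. dX (act g q) y < e} \<subseteq> U"
    using U unfolding metric_open_def by blast
  obtain \<delta> where "0 < \<delta>"
    and \<delta>: "\<forall>g'\<in>carrier G. \<forall>x'\<in>X. dG g g' < \<delta> \<and> dX q x' < \<delta> \<longrightarrow> dX (act g q) (act g' x') < e"
    using act_continuous[of g q e] g q \<open>0 < e\<close> by blast
  have "{g' \<in> carrier G. dG g g' < \<delta>} \<subseteq> {g \<in> carrier G. act g q \<in> U}"
  proof
    fix g' assume g': "g' \<in> {g' \<in> carrier G. dG g g' < \<delta>}"
    with \<delta> q definable_metric_self[OF metric_X q] \<open>0 < \<delta>\<close> have "dX (act g q) (act g' q) < e"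
      by simp
    with ball act_closed[OF _ q] g' show "g' \<in> {g \<in> carrier G. act g q \<in> U}"
      by blast
  qed
  with \<open>0 < \<delta>\<close> show "\<exists>e>0. {y \<in> carrier G. dG g y < e} \<subseteq> {g \<in> carrier G. act g q \<in> U}"
    by blast
qed blast

lemma act_inv_continuous:
  assumes g: "g \<in> carrier G" and x: "x \<in> X" and "0 < e"
  shows "\<exists>\<delta>>0. \<forall>g'\<in>carrier G. \<forall>y\<in>X.
    dG g g' < \<delta> \<and> dX x y < \<delta> \<longrightarrow> dX (act (inv\<^bsub>G\<^esub> g) x) (act (inv\<^bsub>G\<^esub> g') y) < e"
proof -
  have inv_G: "inv\<^bsub>G\<^esub> h \<in> carrier G" if "h \<in> carrier G" for h
    using group.inv_closed[OF group_G that] .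
  obtain \<delta>\<^sub>1 where "0 < \<delta>\<^sub>1" and \<delta>\<^sub>1: "\<forall>g'\<in>carrier G. \<forall>y\<in>X.
      dG (inv\<^bsub>G\<^esub> g) g' < \<delta>\<^sub>1 \<and> dX x y < \<delta>\<^sub>1 \<longrightarrow> dX (act (inv\<^bsub>G\<^esub> g) x) (act g' y) < e"
    using act_continuous[OF inv_G[OF g] x \<open>0 < e\<close>] by blast
  obtain \<delta>\<^sub>2 where "0 < \<delta>\<^sub>2" and \<delta>\<^sub>2: "\<forall>g'\<in>carrier G. dG g g' < \<delta>\<^sub>2 \<longrightarrow> dG (inv\<^bsub>G\<^esub> g) (inv\<^bsub>G\<^esub> g') < \<delta>\<^sub>1"
    using inv_continuous[OF g \<open>0 < \<delta>\<^sub>1\<close>] by blast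
  have "\<forall>g'\<in>carrier G. \<forall>y\<in>X. dG g g' < min \<delta>\<^sub>1 \<delta>\<^sub>2 \<and> dX x y < min \<delta>\<^sub>1 \<delta>\<^sub>2
      \<longrightarrow> dX (act (inv\<^bsub>G\<^esub> g) x) (act (inv\<^bsub>G\<^esub> g') y) < e"
    using \<delta>\<^sub>1 \<delta>\<^sub>2 inv_G by simp
  with \<open>0 < \<delta>\<^sub>1\<close> \<open>0 < \<delta>\<^sub>2\<close> show ?thesis
    by (intro exI[of _ "min \<delta>\<^sub>1 \<delta>\<^sub>2"]) simp
qed

lemma rel_family_moves_into_ball_in_D:
  assumes x: "x \<in> X" and C: "C \<in> D n" "C \<subseteq> X"
  shows "rel_family 1 p (\<lambda>t g. g \<in> carrier G \<and> (\<exists>c\<in>C. dX x (act g c) < hd t)) \<in> D (1 + p)"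
proof -
  define \<Delta> where "\<Delta> = {x @ y @ [dX x y] | x y. x \<in> X \<and> y \<in> X}"
  have \<Delta>_mem: "length y = n \<Longrightarrow> length y' = n \<Longrightarrow> y @ y' @ z \<in> \<Delta> \<longleftrightarrow> y \<in> X \<and> y' \<in> X \<and> [dX y y'] = z"
    for y y' z
    unfolding \<Delta>_def using graph2_mem[OF length_of_mem_D[OF X_in_D] length_of_mem_D[OF X_in_D]]
    by (simp only: eq_commute[of z])
  have x_len: "length x = n"
    using length_of_mem_D[OF X_in_D x] .
  have "\<Delta> \<in> D (n + (n + 1))"
    using metric_X by (simp add: definable_metric_def \<Delta>_def add.assoc)
  from definable_pred_param[OF definable_pred_mem[OF this] x_len]
  have \<Delta>_x: "definable_pred D (n + 1) (\<lambda>v. x @ v \<in> \<Delta>)" .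
  define \<Phi> where "\<Phi> u \<longleftrightarrow> take n (drop (Suc p) u) \<in> C \<and>
      take p (drop 1 u) @ take n (drop (Suc p) u) @ take n (drop (Suc p + n) u) \<in> act_graph \<and>
      x @ take n (drop (Suc p + n) u) @ [u ! (Suc p + n + n)] \<in> \<Delta> \<and> u ! (Suc p + n + n) < u ! 0" for u
  have "definable_pred D (Suc (Suc p + n + n)) \<Phi>"
    unfolding \<Phi>_def
    by (intro definable_pred_conj definable_pred_coord_selection[OF definable_pred_mem[OF C(1)]]
        definable_pred_coord_selection[OF definable_pred_mem[OF act_graph_in_D]]
        definable_pred_coord_selection[OF \<Delta>_x] coord_selection_intros definable_pred_nth_less) auto
  from definable_pred_ex[OF definable_pred_ex[OF definable_pred_ex_last[OF this]]]
  have "definable_pred D (Suc p) (\<lambda>w. drop 1 w \<in> carrier G \<and> (\<exists>c\<in>C. dX x (act (drop 1 w) c) < hd (take 1 w)))"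
  proof (rule definable_pred_cong)
    fix w :: "'m list" assume w: "length w = Suc p"
    then have "w \<noteq> []"
      by auto
    with w have \<Phi>_eq: "\<Phi> (((w @ c) @ y) @ [z]) \<longleftrightarrow> c \<in> C \<and> (drop 1 w \<in> carrier G \<and> c \<in> X \<and> act (drop 1 w) c = y) \<and>
        (x \<in> X \<and> y \<in> X \<and> [dX x y] = [z]) \<and> z < hd (take 1 w)"
      if "length c = n" "length y = n" for c y z
      using that x_len by (simp add: \<Phi>_def act_graph_mem \<Delta>_mem nth_append hd_conv_nth)
    show "(\<exists>c. length c = n \<and> (\<exists>y. length y = n \<and> (\<exists>z. \<Phi> (((w @ c) @ y) @ [z]))))
        \<longleftrightarrow> drop 1 w \<in> carrier G \<and> (\<exists>c\<in>C. dX x (act (drop 1 w) c) < hd (take 1 w))"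
      (is "?L \<longleftrightarrow> ?R")
    proof
      assume ?L
      then obtain c y z where "length c = n" "length y = n" "\<Phi> (((w @ c) @ y) @ [z])"
        by blast
      with \<Phi>_eq show ?R
        by auto
    next
      assume ?R
      then obtain c where c: "drop 1 w \<in> carrier G" "c \<in> C" "dX x (act (drop 1 w) c) < hd (take 1 w)"
        by blast
      then have "c \<in> X" and "act (drop 1 w) c \<in> X"
        using C(2) act_closed by auto
      with c x have "\<Phi> (((w @ c) @ act (drop 1 w) c) @ [dX x (act (drop 1 w) c)])"
        using \<Phi>_eq length_of_mem_D[OF X_in_D] by simp
      with \<open>c \<in> X\<close> \<open>act (drop 1 w) c \<in> X\<close> show ?L
        using length_of_mem_D[OF X_in_D] by blast
    qed
  qed
  then show ?thesis
    unfolding rel_family_in_D_iff by simp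
qed

lemma rel_family_closure_moves_into_ball_in_D:
  assumes x: "x \<in> X" and C: "C \<in> D n" "C \<subseteq> X"
  shows "rel_family 1 p (\<lambda>t g. g \<in> metric_closure (carrier G) dG
      {g \<in> carrier G. \<exists>c\<in>C. dX x (act g c) < hd t}) \<in> D (1 + p)"
proof -
  let ?V = "rel_family 1 p (\<lambda>t g. g \<in> carrier G \<and> (\<exists>c\<in>C. dX x (act g c) < hd t))"
  have "fam_fibre p ?V t = {g \<in> carrier G. \<exists>c\<in>C. dX x (act g c) < hd t}" if "length t = 1" for t
    using fam_fibre_rel_family[OF that] length_of_mem_D[OF carrier_G_in_D] by auto
  then have "rel_family 1 p (\<lambda>t g. g \<in> metric_closure (carrier G) dG (fam_fibre p ?V t))
      = rel_family 1 p (\<lambda>t g. g \<in> metric_closure (carrier G) dG {g \<in> carrier G. \<exists>c\<in>C. dX x (act g c) < hd t})"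
    by (auto simp: rel_family_def)
  moreover have "rel_family 1 p (\<lambda>t g. g \<in> metric_closure (carrier G) dG (fam_fibre p ?V t)) \<in> D (1 + p)"
    by (rule rel_family_metric_closure_in_D[OF metric_G rel_family_moves_into_ball_in_D[OF x C]])
      (auto simp: rel_family_def)
  ultimately show ?thesis
    by simp
qed

lemma exists_limit_translation:
  assumes G: "definably_compact D p (carrier G) (metric_open (carrier G) dG)"
    and x: "x \<in> X" and C: "C \<in> D n" "C \<subseteq> X"
    and adherent: "\<And>e. 0 < e \<Longrightarrow> \<exists>g\<in>carrier G. \<exists>c\<in>C. dX x (act g c) < e"
  shows "\<exists>g\<^sub>0. \<forall>e>0. g\<^sub>0 \<in> metric_closure (carrier G) dG {g \<in> carrier G. \<exists>c\<in>C. dX x (act g c) < e}"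
proof (rule definably_compact_decreasing_common_point[OF G carrier_G_in_D
      rel_family_closure_moves_into_ball_in_D[OF x C]])
  let ?V = "\<lambda>e. {g \<in> carrier G. \<exists>c\<in>C. dX x (act g c) < e}"
  show "g \<in> carrier G" if "g \<in> metric_closure (carrier G) dG (?V e)" for g e
    using that by (simp add: metric_closure_def)
  show "metric_open (carrier G) dG (carrier G - {g. g \<in> metric_closure (carrier G) dG (?V e)})" for e
  proof -
    have "metric_open (carrier G) dG (carrier G - metric_closure (carrier G) dG (?V e))"
      by (rule metric_open_compl_metric_closure) (use definable_metric_triangle[OF metric_G] in auto)
    then show ?thesis
      by simp
  qed
  show "g \<in> metric_closure (carrier G) dG (?V e')"
    if "e \<le> e'" and "g \<in> metric_closure (carrier G) dG (?V e)" for e e' g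
  proof -
    have "?V e \<subseteq> ?V e'"
      using \<open>e \<le> e'\<close> by (auto intro: less_le_trans)
    with that(2) show ?thesis
      using metric_closure_mono by blast
  qed
  show "\<exists>g. g \<in> metric_closure (carrier G) dG (?V e)" if e: "0 < e" for e
  proof -
    obtain g where "g \<in> ?V e"
      using adherent[OF e] by auto
    moreover have "?V e \<subseteq> metric_closure (carrier G) dG (?V e)"
      by (rule subset_metric_closure) (use definable_metric_self[OF metric_G] in auto)
    ultimately show ?thesis
      by blast
  qed
qed

lemma act_mem_if_adherent_to_saturation:
  assumes G: "definably_compact D p (carrier G) (metric_open (carrier G) dG)"
    and x: "x \<in> X" and C: "C \<in> D n" "C \<subseteq> X" "metric_open X dX (X - C)"
    and adherent: "\<And>e. 0 < e \<Longrightarrow> \<exists>g\<in>carrier G. \<exists>c\<in>C. dX x (act g c) < e"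
  shows "\<exists>g\<in>carrier G. act g x \<in> C"
proof -
  obtain g\<^sub>0 where g\<^sub>0: "\<And>e. 0 < e \<Longrightarrow>
      g\<^sub>0 \<in> metric_closure (carrier G) dG {g \<in> carrier G. \<exists>c\<in>C. dX x (act g c) < e}"
    using exists_limit_translation[OF G x C(1,2) adherent] by blast
  obtain e\<^sub>0 :: 'm where "0 < e\<^sub>0"
    using gt_ex by blast
  then have "g\<^sub>0 \<in> carrier G"
    using g\<^sub>0 by (simp add: metric_closure_def)
  let ?y = "act (inv\<^bsub>G\<^esub> g\<^sub>0) x"
  have inv_g\<^sub>0: "inv\<^bsub>G\<^esub> g\<^sub>0 \<in> carrier G"
    using group.inv_closed[OF group_G \<open>g\<^sub>0 \<in> carrier G\<close>] .
  have "?y \<in> metric_closure X dX C"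
    unfolding metric_closure_def
  proof (intro CollectI conjI allI impI)
    show "?y \<in> X"
      using act_closed[OF inv_g\<^sub>0 x] .
    fix \<epsilon> :: 'm assume "0 < \<epsilon>"
    then obtain \<delta> where "0 < \<delta>" and \<delta>: "\<forall>g'\<in>carrier G. \<forall>y\<in>X.
        dG g\<^sub>0 g' < \<delta> \<and> dX x y < \<delta> \<longrightarrow> dX ?y (act (inv\<^bsub>G\<^esub> g') y) < \<epsilon>"
      using act_inv_continuous[OF \<open>g\<^sub>0 \<in> carrier G\<close> x] by blast
    obtain g' c where g': "g' \<in> carrier G" "dG g\<^sub>0 g' < \<delta>" and c: "c \<in> C" "dX x (act g' c) < \<delta>"
      using g\<^sub>0[OF \<open>0 < \<delta>\<close>] \<open>0 < \<delta>\<close> unfolding metric_closure_def by blast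
    with \<delta> C(2) act_closed have "dX ?y (act (inv\<^bsub>G\<^esub> g') (act g' c)) < \<epsilon>"
      by blast
    moreover have "act (inv\<^bsub>G\<^esub> g') (act g' c) = c"
      using act_inv_act g' c C(2) by blast
    ultimately show "\<exists>c\<in>C. dX ?y c < \<epsilon>"
      using c by metis
  qed
  with metric_closure_subset[OF C(3,2)] have "?y \<in> C"
    by blast
  with inv_g\<^sub>0 show ?thesis
    by blast
qed

lemma pi_image_closed:
  assumes G: "definably_compact D p (carrier G) (metric_open (carrier G) dG)"
    and C: "C \<in> D n" "C \<subseteq> X" "metric_open X dX (X - C)"
  shows "quotient_open X dX Q pi (Q - pi ` C)"
  unfolding quotient_open_def metric_open_def
proof (intro conjI ballI)
  fix x assume "x \<in> {x \<in> X. pi x \<in> Q - pi ` C}"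
  then have x: "x \<in> X" and x_out: "pi x \<notin> pi ` C"
    by auto
  show "\<exists>e>0. {y \<in> X. dX x y < e} \<subseteq> {x \<in> X. pi x \<in> Q - pi ` C}"
  proof (rule ccontr)
    assume no_ball: "\<not> (\<exists>e>0. {y \<in> X. dX x y < e} \<subseteq> {x \<in> X. pi x \<in> Q - pi ` C})"
    have "\<exists>g\<in>carrier G. \<exists>c\<in>C. dX x (act g c) < e" if "0 < e" for e
    proof -
      from no_ball that obtain y where y: "y \<in> X" "dX x y < e" "pi y \<in> pi ` C"
        using pi_in_Q by blast
      then obtain c where "c \<in> C" and "pi c = pi y"
        by auto
      with y C(2) obtain g where "g \<in> carrier G" and "y = act g c"
        using pi_eq_iff by blast
      with \<open>c \<in> C\<close> y show ?thesis
        by blast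
    qed
    from act_mem_if_adherent_to_saturation[OF G x C this]
    obtain g where "g \<in> carrier G" and "act g x \<in> C"
      by blast
    moreover have "pi (act g x) = pi x"
      using pi_eq_iff[OF x act_closed[OF \<open>g \<in> carrier G\<close> x]] \<open>g \<in> carrier G\<close> by metis
    ultimately show False
      using x_out by (metis image_eqI)
  qed
qed auto

lemma definably_compact_quotient:
  assumes "definably_compact D n X (metric_open X dX)"
  shows "definably_compact D n Q (quotient_open X dX Q pi)"
  unfolding definably_compact_iff
proof (intro allI impI)
  fix k F assume F: "closed_filtered_family D k n Q (quotient_open X dX Q pi) F"
  have "\<exists>x\<in>X. \<forall>t\<in>fam_index k F. pi x \<in> fam_fibre n F t"
  proof (rule definably_compact_common_preimage[OF assms definable_map_pi _ F])
    fix C assume "quotient_open X dX Q pi (Q - C)"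
    moreover have "{x \<in> X. pi x \<in> Q - C} = X - {x \<in> X. pi x \<in> C}"
      using pi_in_Q by blast
    ultimately show "metric_open X dX (X - {x \<in> X. pi x \<in> C})"
      by (simp add: quotient_open_def)
  next
    fix t assume t: "t \<in> fam_index k F"
    from F t have "F \<in> D (k + n)" and "fam_fibre n F t \<subseteq> Q"
      by (simp_all add: closed_filtered_family_def)
    moreover obtain q where "q \<in> fam_fibre n F t"
      using fam_fibre_nonempty[OF \<open>F \<in> D (k + n)\<close> t] by blast
    ultimately have "q \<in> Q"
      by blast
    with \<open>q \<in> fam_fibre n F t\<close> show "\<exists>x\<in>X. pi x \<in> fam_fibre n F t"
      using pi_rep Q_subset_X by (metis subsetD)
  qed
  then show "(\<Inter>t\<in>fam_index k F. fam_fibre n F t) \<noteq> {}"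
    by blast
qed

lemma definably_compact_of_quotient:
  assumes G: "definably_compact D p (carrier G) (metric_open (carrier G) dG)"
    and Q: "definably_compact D n Q (quotient_open X dX Q pi)"
  shows "definably_compact D n X (metric_open X dX)"
  unfolding definably_compact_iff
proof (intro allI impI)
  fix k F assume F: "closed_filtered_family D k n X (metric_open X dX) F"
  then have FX: "fam_fibre n F t \<subseteq> X" if "t \<in> fam_index k F" for t
    using that by (simp add: closed_filtered_family_def)
  obtain q where q: "\<forall>t\<in>fam_index k F. q \<in> pi ` fam_fibre n F t"
    using definably_compact_common_image[OF Q definable_map_pi _ pi_image_closed[OF G] F] pi_in_Q by blast
  obtain t\<^sub>0 where "t\<^sub>0 \<in> fam_index k F"
    using F by (auto simp: closed_filtered_family_def)
  with q FX have "q \<in> X"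
    using pi_in_Q Q_subset_X by blast
  have "\<exists>g\<in>carrier G. \<forall>t\<in>fam_index k F. act g q \<in> fam_fibre n F t"
  proof (rule definably_compact_common_preimage[OF G definable_map_orbit[OF \<open>q \<in> X\<close>] _ F])
    fix C assume "C \<subseteq> X" and "metric_open X dX (X - C)"
    moreover have "{g \<in> carrier G. act g q \<in> X - C} = carrier G - {g \<in> carrier G. act g q \<in> C}"
      using act_closed[OF _ \<open>q \<in> X\<close>] by blast
    ultimately show "metric_open (carrier G) dG (carrier G - {g \<in> carrier G. act g q \<in> C})"
      using metric_open_orbit_preimage[OF \<open>q \<in> X\<close>] by metis
  next
    fix t assume t: "t \<in> fam_index k F"
    with q obtain x where x: "x \<in> fam_fibre n F t" and "q = pi x"
      by blast
    moreover have "x \<in> X"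
      using x FX[OF t] by blast
    ultimately obtain g where "g \<in> carrier G" and "q = act g x"
      using pi_in_orbit by blast
    with \<open>x \<in> X\<close> have "act (inv\<^bsub>G\<^esub> g) q = x" and "inv\<^bsub>G\<^esub> g \<in> carrier G"
      using act_inv_act group.inv_closed[OF group_G] by auto
    with x show "\<exists>g\<in>carrier G. act g q \<in> fam_fibre n F t"
      by metis
  qed
  then show "(\<Inter>t\<in>fam_index k F. fam_fibre n F t) \<noteq> {}"
    by blast
qed

end

theorem proposition5p9:
  fixes D :: "nat \<Rightarrow> ('m::{linordered_ab_group_add, dense_linorder, no_top, no_bot}) list set set"
    and G :: "'m list monoid" and dG :: "'m list \<Rightarrow> 'm list \<Rightarrow> 'm"
    and X :: "'m list set" and dX :: "'m list \<Rightarrow> 'm list \<Rightarrow> 'm"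
    and act :: "'m list \<Rightarrow> 'm list \<Rightarrow> 'm list"
    and Q :: "'m list set" and pi :: "'m list \<Rightarrow> 'm list"
    and p n :: nat
  assumes "expansion_of_ogroup D"
    and "locally_o_minimal D"
    and "definably_complete D"
    and "definable_metric_group D p G dG"
    and "definably_compact D p (carrier G) (metric_open (carrier G) dG)"
    and "definable_metric D n X dX"
    and "definable_continuous_action D p n G dG X dX act"
    and "definable_quotient D n G X dX act Q pi"
  shows "(\<forall>C\<in>D n. C \<subseteq> X \<and> metric_open X dX (X - C) \<longrightarrow>
            quotient_open X dX Q pi (Q - pi ` C))
         \<and> (definably_compact D n X (metric_open X dX)
              \<longleftrightarrow> definably_compact D n Q (quotient_open X dX Q pi))"
proof -
  interpret definable_action D G dG X dX act Q pi p n
    using assms(1,4,6,7,8) by (simp add: definable_action_def definable_action_axioms_def ogroup_expansion_def)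
  show ?thesis
    using pi_image_closed[OF assms(5)] definably_compact_quotient definably_compact_of_quotient[OF assms(5)]
    by blast
qed

end
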